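(* Let $A \subset \mathbb{Z}^d$ be a finite set such that $A - A$ generates $\mathbb{Z}^d$ additively and its convex hull $\Delta_A$ is a $d$-dimensional simplex with vertices $v_1, \ldots, v_{d+1}$. Let $\widetilde{v} = (v,1) \in \mathbb{Z}^{d+1}$ denote the lift of $v \in \mathbb{Z}^d$, let $\mathcal{C}_A = \{\sum_{a \in A} n_a \widetilde{a} : n_a \in \mathbb{N}\}$, let $\Lambda = \mathrm{span}_{\mathbb{Z}}\{\widetilde{v}_1, \ldots, \widetilde{v}_{d+1}\}$, and for $\pi \in \mathbb{Z}^{d+1}$ let $\mathcal{S}_\pi$ be the set of elements of $\mathcal{C}_A$ congruent to $\pi$ modulo $\Lambda$. Call $(g, N) \in \mathcal{S}_\pi$ (with $g \in \mathbb{Z}^d$, $N \in \mathbb{N}$) a minimal element of $\mathcal{S}_\pi$ if $(g,N) - \widetilde{v}_i \notin \mathcal{C}_A$ for every $i = 1, \ldots, d+1$. Then every minimal element $(\alpha, M)$ of $\mathcal{S}_\pi$ satisfies \[ M \leq \mathrm{vol}(\Delta_A)\cdot d! - 1 . \] In particular, $\mathcal{S}_\pi$ has finitely many minimal elements.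
   Context: $\mathbb{N} = \{0,1,2,\ldots\}$. For a point $(g,N) \in \mathbb{Z}^d \times \mathbb{Z}$ the last coordinate $N$ is called its height. $\mathrm{vol}(\Delta_A)$ is the $d$-dimensional volume of the convex hull of $A$. *)

theory Defs
  imports "HOL-Analysis.Analysis"
begin

text \<open>Integer points of Z^d are vectors int^'d; d = CARD('d).
  Points of Z^(d+1) are pairs (g, N) :: (int^'d) \<times> int, N being the height.\<close>

definition rvec :: "int^'d \<Rightarrow> real^'d" where
  "rvec x = (\<chi> i. real_of_int (x $ i))"

definition lift :: "int^'d \<Rightarrow> (int^'d) \<times> int" where
  "lift v = (v, 1)"

definition diffset :: "(int^'d) set \<Rightarrow> (int^'d) set" where
  "diffset A = {a - b | a b. a \<in> A \<and> b \<in> A}"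

definition int_span :: "(int^'d) set \<Rightarrow> (int^'d) set" where
  "int_span S = {(\<Sum>s\<in>S. c s *s s) | c. True}"

definition coneA :: "(int^'d) set \<Rightarrow> ((int^'d) \<times> int) set" where
  "coneA A = {(\<Sum>a\<in>A. int (n a) *s a, \<Sum>a\<in>A. int (n a)) | n. True}"

definition lattice_of :: "(nat \<Rightarrow> int^'d) \<Rightarrow> ((int^'d) \<times> int) set" where
  "lattice_of v = {(\<Sum>i\<in>{1..CARD('d)+1}. c i *s v i, \<Sum>i\<in>{1..CARD('d)+1}. c i) | c. True}"

definition S_pi :: "(int^'d) set \<Rightarrow> (nat \<Rightarrow> int^'d) \<Rightarrow> (int^'d) \<times> int \<Rightarrow> ((int^'d) \<times> int) set" where
  "S_pi A v \<pi> = {p \<in> coneA A. p - \<pi> \<in> lattice_of v}"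

definition minimal_elem :: "(int^'d) set \<Rightarrow> (nat \<Rightarrow> int^'d) \<Rightarrow> (int^'d) \<times> int \<Rightarrow> (int^'d) \<times> int \<Rightarrow> bool" where
  "minimal_elem A v \<pi> p \<longleftrightarrow> p \<in> S_pi A v \<pi> \<and>
     (\<forall>i\<in>{1..CARD('d)+1}. p - lift (v i) \<notin> coneA A)"

end

theory Submission
  imports Defs
begin

text \<open>
  Let \<open>\<Lambda>' \<subseteq> \<int>^d\<close> be spanned by the edge vectors \<open>v\<^sub>i - v\<^sub>d\<^sub>+\<^sub>1\<close>. A Blichfeldt-type
  packing argument shows that \<open>\<Lambda>'\<close> has at most \<open>D = d! vol(\<Delta>\<^sub>A)\<close> cosets, and
  \<open>(g, N) \<mapsto> g - N v\<^sub>d\<^sub>+\<^sub>1\<close> identifies \<open>\<int>^(d+1)/\<Lambda>\<close> with \<open>\<int>^d/\<Lambda>'\<close>.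
  Write \<open>(\<alpha>, M) \<in> C\<^sub>A\<close> as a sum of \<open>M\<close> lifted points of \<open>A\<close> and consider its \<open>M + 1\<close>
  partial sums. If \<open>M \<ge> D\<close>, two of them, \<open>P\<^sub>j\<close> and \<open>P\<^sub>k\<close> with \<open>j < k\<close>, are congruent
  modulo \<open>\<Lambda>\<close>. Their difference lies in \<open>C\<^sub>A \<inter> \<Lambda>\<close>; as the points of \<open>A\<close> have nonnegative
  barycentric coordinates with respect to the vertices, it is a combination of the lifted
  vertices with nonnegative integer coefficients and positive height. Removing one lifted
  vertex from it shows that \<open>(\<alpha>, M)\<close> is not minimal.
\<close>

section \<open>Linear images and Lebesgue measure\<close>

typedef ('a::finite) ordered_index = "{..<CARD('a)}"
  morphisms ordered_index_rep ordered_index_abs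
  by (rule exI[of _ 0]) simp

instantiation ordered_index :: (finite) linorder
begin
definition less_eq_ordered_index :: "'a ordered_index \<Rightarrow> 'a ordered_index \<Rightarrow> bool" where
  "x \<le> y \<longleftrightarrow> ordered_index_rep x \<le> ordered_index_rep y"
definition less_ordered_index :: "'a ordered_index \<Rightarrow> 'a ordered_index \<Rightarrow> bool" where
  "x < y \<longleftrightarrow> ordered_index_rep x < ordered_index_rep y"
instance
  by standard (auto simp: less_eq_ordered_index_def less_ordered_index_def ordered_index_rep_inject)
end

lemma card_ordered_index: "CARD('a::finite ordered_index) = CARD('a)"
  by (metis card_lessThan type_definition.card type_definition_ordered_index)

instance ordered_index :: (finite) finite
  by standard (metis card_ordered_index card.infinite zero_less_card_finite less_irrefl)

instance ordered_index :: (finite) wellorder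
proof
  fix P :: "'a ordered_index \<Rightarrow> bool" and a :: "'a ordered_index"
  assume step: "\<And>x. (\<And>y. y < x \<Longrightarrow> P y) \<Longrightarrow> P x"
  have "\<forall>x. ordered_index_rep x = n \<longrightarrow> P x" for n
    by (induction n rule: less_induct) (use step in \<open>auto simp: less_ordered_index_def\<close>)
  then show "P a" by blast
qed

lemma prod_Basis_cart: "(\<Prod>b\<in>Basis. (x::real^'n) \<bullet> b) = (\<Prod>i\<in>UNIV. x $ i)"
  by (simp add: Basis_vec_def UNION_singleton_eq_range prod.reindex axis_eq_axis inj_on_def cart_eq_inner_axis)

lemma sum_Basis_cart: "(\<Sum>b\<in>Basis. (x::real^'n) \<bullet> b) = (\<Sum>i\<in>UNIV. x $ i)"
  by (simp add: Basis_vec_def UNION_singleton_eq_range sum.reindex axis_eq_axis inj_on_def cart_eq_inner_axis)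

lemma linear_permute_coordinates: "linear (\<lambda>x::real^'n::finite. (\<chi> j. x $ \<sigma> j) :: real^'m::finite)"
  by (auto simp: linear_iff vec_eq_iff)

lemma borel_measurable_permute_coordinates [measurable]:
  "(\<lambda>x::real^'n::finite. (\<chi> j. x $ \<sigma> j) :: real^'m::finite) \<in> borel_measurable borel"
  by (intro borel_measurable_continuous_onI linear_continuous_on
      linear_conv_bounded_linear[THEN iffD1] linear_permute_coordinates)

lemma distr_lborel_permute_coordinates:
  fixes \<sigma> :: "'m::finite \<Rightarrow> 'n::finite"
  assumes "bij \<sigma>"
  shows "distr lborel borel (\<lambda>x::real^'n. (\<chi> j. x $ \<sigma> j) :: real^'m) = lborel"
proof (rule lborel_eqI[symmetric])
  let ?P = "\<lambda>x::real^'n. (\<chi> j. x $ \<sigma> j) :: real^'m"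
  fix l u :: "real^'m"
  assume lu: "\<And>b. b \<in> Basis \<Longrightarrow> l \<bullet> b \<le> u \<bullet> b"
  have le: "l $ i \<le> u $ i" for i
    using lu[of "axis i 1"] by (simp add: cart_eq_inner_axis axis_in_Basis_iff)
  let ?l = "(\<chi> i. l $ inv \<sigma> i) :: real^'n" and ?u = "(\<chi> i. u $ inv \<sigma> i) :: real^'n"
  have "(\<forall>j. l $ j < x $ \<sigma> j \<and> x $ \<sigma> j < u $ j) \<longleftrightarrow>
        (\<forall>i. l $ inv \<sigma> i < x $ i \<and> x $ i < u $ inv \<sigma> i)" for x :: "real^'n"
    using assms by (metis bij_inv_eq_iff)
  then have "?P -` box l u = box ?l ?u"
    by (auto simp: mem_box_cart)
  then have "emeasure (distr lborel borel ?P) (box l u) = emeasure lborel (box ?l ?u)"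
    by (simp add: emeasure_distr)
  also have "\<dots> = (\<Prod>b\<in>Basis. (?u - ?l) \<bullet> b)"
    using le by (subst emeasure_lborel_box_eq) (auto simp: Basis_vec_def inner_axis)
  also have "\<dots> = (\<Prod>i\<in>UNIV. u $ inv \<sigma> i - l $ inv \<sigma> i)"
    by (simp add: prod_Basis_cart)
  also have "\<dots> = (\<Prod>j\<in>UNIV. u $ j - l $ j)"
    using prod.reindex_bij_betw[OF bij_betw_inv_into[OF assms], of "\<lambda>j. u $ j - l $ j"] by simp
  finally show "emeasure (distr lborel borel ?P) (box l u) = (\<Prod>b\<in>Basis. (u - l) \<bullet> b)"
    by (simp add: prod_Basis_cart)
qed simp

lemma measure_permute_coordinates_image:
  fixes \<sigma> :: "'m::finite \<Rightarrow> 'n::finite" and S :: "(real^'n) set"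
  assumes \<sigma>: "bij \<sigma>" and S: "S \<in> sets borel"
  shows "measure lebesgue ((\<lambda>x::real^'n. (\<chi> j. x $ \<sigma> j) :: real^'m) ` S) = measure lebesgue S"
proof -
  define P where "P = (\<lambda>x::real^'n. (\<chi> j. x $ \<sigma> j) :: real^'m)"
  define Q where "Q = (\<lambda>y::real^'m. (\<chi> i. y $ inv \<sigma> i) :: real^'n)"
  have QP: "Q (P x) = x" for x
    by (simp add: P_def Q_def vec_eq_iff surj_f_inv_f[OF bij_is_surj[OF \<sigma>]])
  have PQ: "P (Q y) = y" for y
    by (simp add: P_def Q_def vec_eq_iff inv_f_f[OF bij_is_inj[OF \<sigma>]])
  have "P ` S = Q -` S"
    using QP PQ by (auto intro: image_eqI[of _ P, OF PQ[symmetric]])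
  then have PS: "P ` S \<in> sets borel"
    using measurable_sets_borel[OF borel_measurable_permute_coordinates S] by (simp add: Q_def)
  have "P -` P ` S = S"
    using QP by (metis inj_def inj_vimage_image_eq)
  then have "measure lborel (P ` S) = measure lborel S"
    using PS distr_lborel_permute_coordinates[OF \<sigma>] measure_distr[of P lborel borel "P ` S"]
    by (simp add: P_def)
  then show ?thesis
    using PS S by (simp add: P_def)
qed

lemma compact_linear_image:
  fixes f :: "'a::euclidean_space \<Rightarrow> 'b::euclidean_space"
  shows "linear f \<Longrightarrow> compact S \<Longrightarrow> compact (f ` S)"
  by (simp add: compact_continuous_image linear_continuous_on linear_linear)

lemma measure_linear_image_proportional:
  fixes f :: "real^'n::finite \<Rightarrow> real^'n"
  assumes f: "linear f"
  obtains c where "\<And>S. compact S \<Longrightarrow> measure lebesgue (f ` S) = c * measure lebesgue S"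
proof -
  \<comment> \<open>\<open>measure_linear_image\<close> needs a well-ordered index type, so conjugate by a
    coordinate permutation onto \<open>'n ordered_index\<close>.\<close>
  obtain \<sigma> :: "'n ordered_index \<Rightarrow> 'n" where \<sigma>: "bij \<sigma>"
    using finite_same_card_bij[OF finite_class.finite_UNIV finite_class.finite_UNIV card_ordered_index] by blast
  define P where "P = (\<lambda>x::real^'n. (\<chi> j. x $ \<sigma> j) :: real^'n ordered_index)"
  define Q where "Q = (\<lambda>y::real^'n ordered_index. (\<chi> i. y $ inv \<sigma> i) :: real^'n)"
  have P: "linear P" and Q: "linear Q"
    by (simp_all add: P_def Q_def linear_permute_coordinates)
  have QP: "Q (P x) = x" for x
    by (simp add: P_def Q_def vec_eq_iff surj_f_inv_f[OF bij_is_surj[OF \<sigma>]])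
  define g where "g = P \<circ> f \<circ> Q"
  have g: "linear g"
    unfolding g_def by (intro linear_compose P Q f)
  have measure_P: "measure lebesgue (P ` S) = measure lebesgue S" if "compact S" for S
    using measure_permute_coordinates_image[OF \<sigma>] that by (simp add: P_def borel_compact)
  have "measure lebesgue (f ` S) = \<bar>det (matrix g)\<bar> * measure lebesgue S" if S: "compact S" for S
  proof -
    have "P ` f ` S = g ` P ` S"
      by (simp add: g_def image_comp QP comp_def)
    then show ?thesis
      using S measure_P measure_linear_image[OF g lmeasurable_compact] compact_linear_image f P
      by metis
  qed
  then show thesis ..
qed

lemma measure_linear_image_cbox_eq_fact_simplex:
  fixes f :: "real^'n::finite \<Rightarrow> real^'n"
  assumes "linear f"
  shows "measure lebesgue (f ` cbox 0 1) =
           fact CARD('n) * measure lebesgue (f ` (convex hull (insert 0 Basis)))"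
proof -
  obtain c where c: "\<And>S. compact S \<Longrightarrow> measure lebesgue (f ` S) = c * measure lebesgue S"
    using measure_linear_image_proportional[OF assms] by blast
  have "(0::real^'n) \<in> cbox 0 1"
    by (simp add: mem_box_cart)
  then have "measure lebesgue (cbox 0 (1::real^'n)) = 1"
    using content_cbox_cart[of 0 "1::real^'n"] by auto
  moreover have "measure lebesgue (convex hull (insert 0 (Basis :: (real^'n) set))) = 1 / fact CARD('n)"
    using content_std_simplex[where 'a="real^'n"] by (simp add: borel_compact finite_imp_compact_convex_hull)
  ultimately show ?thesis
    using c[of "cbox 0 1"] c[of "convex hull (insert 0 Basis)"] by (simp add: finite_imp_compact_convex_hull)
qed

section \<open>Counting integer points incongruent modulo a sublattice\<close>

lemma rvec_nth [simp]: "rvec x $ i = of_int (x $ i)"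
  by (simp add: rvec_def)

lemma rvec_0 [simp]: "rvec 0 = 0"
  by (simp add: vec_eq_iff)

lemma rvec_diff: "rvec (a - b) = rvec a - rvec b"
  by (simp add: vec_eq_iff)

lemma rvec_eq_iff: "rvec a = rvec b \<longleftrightarrow> a = b"
  by (simp add: vec_eq_iff)

lemma emeasure_piecewise_translation:
  fixes X :: "'i \<Rightarrow> 'a::euclidean_space set" and \<tau> :: "'i \<Rightarrow> 'a"
  assumes "countable I" and "\<And>k. k \<in> I \<Longrightarrow> X k \<in> sets lebesgue"
    and "disjoint_family_on X I" and "disjoint_family_on (\<lambda>k. (+) (\<tau> k) ` X k) I"
  shows "emeasure lebesgue (\<Union>k\<in>I. (+) (\<tau> k) ` X k) = emeasure lebesgue (\<Union>k\<in>I. X k)"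
proof -
  have "emeasure lebesgue (\<Union>k\<in>I. (+) (\<tau> k) ` X k) =
      (\<integral>\<^sup>+k. emeasure lebesgue ((+) (\<tau> k) ` X k) \<partial>count_space I)"
    using assms lebesgue_sets_translation by (intro emeasure_UN_countable) auto
  also have "\<dots> = (\<integral>\<^sup>+k. emeasure lebesgue (X k) \<partial>count_space I)"
    using emeasure_lebesgue_affine[of 1 "\<tau> _" "X _"] by (simp add: add.commute)
  also have "\<dots> = emeasure lebesgue (\<Union>k\<in>I. X k)"
    using assms by (intro emeasure_UN_countable[symmetric]) auto
  finally show ?thesis .
qed

lemma integer_translate_unit_box:
  assumes "y \<in> box (rvec r) (rvec r + 1)" "y' \<in> box (rvec r') (rvec r' + 1)" "y - y' = rvec \<mu>"
  shows "\<mu> = r - r'"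
proof -
  have "\<mu> $ i = r $ i - r' $ i" for i
  proof -
    have "of_int (r $ i) < y $ i" "y $ i < of_int (r $ i) + 1"
      "of_int (r' $ i) < y' $ i" "y' $ i < of_int (r' $ i) + 1" "y $ i - y' $ i = of_int (\<mu> $ i)"
      using assms by (auto simp: mem_box_cart vec_eq_iff)
    then have "\<mu> $ i < r $ i - r' $ i + 1" "r $ i - r' $ i < \<mu> $ i + 1"
      by linarith+
    then show ?thesis by linarith
  qed
  then show ?thesis by (simp add: vec_eq_iff)
qed

lemma emeasure_Union_unit_boxes:
  fixes R :: "(int^'n::finite) set"
  assumes "finite R"
  shows "emeasure lebesgue (\<Union>r\<in>R. box (rvec r) (rvec r + 1)) = card R"
proof -
  have "emeasure lborel (box (rvec r) (rvec r + 1)) = (\<Prod>b\<in>Basis. (1::real^'n) \<bullet> b)" for r :: "int^'n"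
    by (subst emeasure_lborel_box) (auto simp: Basis_vec_def inner_axis)
  then have "emeasure lebesgue (box (rvec r) (rvec r + 1)) = 1" for r :: "int^'n"
    by (simp add: prod_Basis_cart)
  moreover have "disjoint_family_on (\<lambda>r. box (rvec r) (rvec r + 1)) R"
    unfolding disjoint_family_on_def
    using integer_translate_unit_box[where \<mu> = 0] by (metis diff_self disjoint_iff eq_iff_diff_eq_0 rvec_0)
  moreover have "(\<lambda>r. box (rvec r) (rvec r + 1)) ` R \<subseteq> sets lebesgue"
    by (auto intro: fmeasurableD lmeasurable_box)
  ultimately show ?thesis
    using sum_emeasure[of "\<lambda>r. box (rvec r) (rvec r + 1)" R lebesgue] assms by simp
qed

lemma unit_box_translates_eq:
  fixes f :: "real^'n::finite \<Rightarrow> real^'n"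
  assumes f: "linear f" "inj f" and f_int: "\<And>\<kappa>. \<exists>\<mu>. f (rvec \<kappa>) = rvec \<mu>"
    and incongruent: "\<And>r r' \<kappa>. r \<in> R \<Longrightarrow> r' \<in> R \<Longrightarrow> rvec r - rvec r' = f (rvec \<kappa>) \<Longrightarrow> r = r'"
    and "r \<in> R" "r' \<in> R"
    and y: "y \<in> box (rvec r) (rvec r + 1)" and y': "y' \<in> box (rvec r') (rvec r' + 1)"
    and eq: "y - f (rvec \<kappa>) = y' - f (rvec \<kappa>')"
  shows "r = r' \<and> \<kappa> = \<kappa>'"
proof -
  obtain \<mu> where \<mu>: "f (rvec (\<kappa> - \<kappa>')) = rvec \<mu>"
    using f_int by blast
  have "y - y' = rvec \<mu>"
    using eq \<mu> by (simp add: rvec_diff linear_diff[OF f(1)] algebra_simps)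
  then have "\<mu> = r - r'"
    by (rule integer_translate_unit_box[OF y y'])
  then have diff: "rvec r - rvec r' = f (rvec (\<kappa> - \<kappa>'))"
    using \<mu> by (simp add: rvec_diff)
  with \<open>r \<in> R\<close> \<open>r' \<in> R\<close> have "r = r'"
    by (rule incongruent)
  with diff have "\<kappa> = \<kappa>'"
    using f by (metis diff_self linear_0 injD rvec_0 rvec_eq_iff eq_iff_diff_eq_0)
  with \<open>r = r'\<close> show ?thesis
    by simp
qed

lemma translate_mem_linear_image_cbox:
  fixes f g :: "real^'n::finite \<Rightarrow> real^'n"
  assumes f: "linear f" and fg: "f (g y) = y"
    and cell: "\<And>i. of_int (\<kappa> $ i) \<le> g y $ i \<and> g y $ i < of_int (\<kappa> $ i) + 1"
  shows "y - f (rvec \<kappa>) \<in> f ` cbox 0 1"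
proof (rule rev_image_eqI)
  have "0 \<le> g y $ i - \<kappa> $ i \<and> g y $ i - \<kappa> $ i \<le> 1" for i
    using cell[of i] by linarith
  then show "g y - rvec \<kappa> \<in> cbox 0 1"
    by (simp add: mem_box_cart)
  show "y - f (rvec \<kappa>) = f (g y - rvec \<kappa>)"
    by (simp add: linear_diff[OF f] fg)
qed

lemma card_pairwise_incongruent_le_measure:
  fixes f :: "real^'n::finite \<Rightarrow> real^'n" and R :: "(int^'n) set"
  assumes f: "linear f" "inj f" and f_int: "\<And>\<kappa>. \<exists>\<mu>. f (rvec \<kappa>) = rvec \<mu>"
    and R: "finite R"
    and incongruent: "\<And>r r' \<kappa>. r \<in> R \<Longrightarrow> r' \<in> R \<Longrightarrow> rvec r - rvec r' = f (rvec \<kappa>) \<Longrightarrow> r = r'"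
  shows "real (card R) \<le> measure lebesgue (f ` cbox 0 1)"
proof -
  define g where "g = inv f"
  have g: "linear g" and fg: "f (g y) = y" for y
    using f linear_injective_imp_surjective[OF f] inj_linear_imp_inv_linear[OF f]
    by (simp_all add: g_def surj_f_inv_f)
  have [measurable]: "(\<lambda>y. g y $ i) \<in> borel_measurable borel" for i
    using g by (intro borel_measurable_continuous_onI continuous_on_component
        linear_continuous_on linear_conv_bounded_linear[THEN iffD1])
  \<comment> \<open>The cells \<open>f (\<kappa> + [0,1)^n)\<close> tile space; translating the part of each unit box
    lying in the cell of \<open>\<kappa>\<close> by \<open>- f \<kappa>\<close> packs all boxes disjointly into \<open>f ([0,1]^n)\<close>.\<close>
  define cell where "cell \<kappa> = {y. \<forall>i. of_int (\<kappa> $ i) \<le> g y $ i \<and> g y $ i < of_int (\<kappa> $ i) + 1}"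
    for \<kappa> :: "int^'n"
  have cell_iff: "y \<in> cell \<kappa> \<longleftrightarrow> (\<chi> i. \<lfloor>g y $ i\<rfloor>) = \<kappa>" for y \<kappa>
    by (simp add: cell_def vec_eq_iff floor_eq_iff)
  define X where "X = (\<lambda>(r, \<kappa>). box (rvec r) (rvec r + 1) \<inter> cell \<kappa>)"
  define \<tau> :: "(int^'n) \<times> (int^'n) \<Rightarrow> real^'n" where "\<tau> = (\<lambda>(r, \<kappa>). - f (rvec \<kappa>))"
  define K where "K = R \<times> (UNIV :: (int^'n) set)"
  have "(+) (\<tau> (r, \<kappa>)) ` X (r, \<kappa>) \<inter> (+) (\<tau> (r', \<kappa>')) ` X (r', \<kappa>') = {}"
    if rR: "r \<in> R" "r' \<in> R" and ne: "(r, \<kappa>) \<noteq> (r', \<kappa>')" for r \<kappa> r' \<kappa>'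
  proof (rule equals0I)
    fix z assume "z \<in> (+) (\<tau> (r, \<kappa>)) ` X (r, \<kappa>) \<inter> (+) (\<tau> (r', \<kappa>')) ` X (r', \<kappa>')"
    then obtain y y' where y: "y \<in> box (rvec r) (rvec r + 1)" "y' \<in> box (rvec r') (rvec r' + 1)"
      and eq: "y - f (rvec \<kappa>) = y' - f (rvec \<kappa>')"
      by (auto simp: X_def \<tau>_def)
    have "r = r' \<and> \<kappa> = \<kappa>'"
      by (rule unit_box_translates_eq[OF f f_int]) (fact incongruent rR y eq)+
    with ne show False
      by simp
  qed
  then have "disjoint_family_on (\<lambda>k. (+) (\<tau> k) ` X k) K"
    by (auto simp: disjoint_family_on_def K_def)
  moreover have "disjoint_family_on X K"
    using integer_translate_unit_box[where \<mu> = 0]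
    by (auto simp: disjoint_family_on_def K_def X_def cell_iff)
  moreover have "X k \<in> sets lebesgue" for k
    by (auto simp: X_def cell_def split: prod.split)
  ultimately have "emeasure lebesgue (\<Union>k\<in>K. (+) (\<tau> k) ` X k) = emeasure lebesgue (\<Union>k\<in>K. X k)"
    using R by (intro emeasure_piecewise_translation) (auto simp: K_def intro: countable_finite)
  also have "(\<Union>k\<in>K. X k) = (\<Union>r\<in>R. box (rvec r) (rvec r + 1))"
    by (auto simp: K_def X_def cell_iff)
  also have "emeasure lebesgue \<dots> = card R"
    using R by (rule emeasure_Union_unit_boxes)
  finally have card_R: "emeasure lebesgue (\<Union>k\<in>K. (+) (\<tau> k) ` X k) = card R" .
  have "(+) (\<tau> (r, \<kappa>)) ` X (r, \<kappa>) \<subseteq> f ` cbox 0 1" for r \<kappa>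
  proof
    fix z assume "z \<in> (+) (\<tau> (r, \<kappa>)) ` X (r, \<kappa>)"
    then obtain y where "y \<in> cell \<kappa>" and "z = y - f (rvec \<kappa>)"
      by (auto simp: X_def \<tau>_def)
    then show "z \<in> f ` cbox 0 1"
      using translate_mem_linear_image_cbox[of f g y \<kappa>] f(1) fg by (simp add: cell_def)
  qed
  then have "(\<Union>k\<in>K. (+) (\<tau> k) ` X k) \<subseteq> f ` cbox 0 1"
    by (intro UN_least) (metis prod.collapse)
  moreover have "f ` cbox 0 1 \<in> fmeasurable lebesgue"
    by (intro lmeasurable_compact compact_linear_image f compact_cbox)
  ultimately have "card R \<le> emeasure lebesgue (f ` cbox 0 1)"
    unfolding card_R[symmetric] by (intro emeasure_mono fmeasurableD)
  then show ?thesis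
    using \<open>f ` cbox 0 1 \<in> fmeasurable lebesgue\<close>
    by (simp add: emeasure_eq_measure2 ennreal_of_nat_eq_real_of_nat ennreal_le_iff)
qed

section \<open>The cone \<open>C\<^sub>A\<close>\<close>

lemma coneA_memI: "(\<Sum>a\<in>A. int (n a) *s a, \<Sum>a\<in>A. int (n a)) \<in> coneA A"
  unfolding coneA_def by blast

lemma zero_in_coneA: "0 \<in> coneA A"
  using coneA_memI[of "\<lambda>_. 0" A] by (simp add: zero_prod_def)

lemma coneA_add: "x \<in> coneA A \<Longrightarrow> y \<in> coneA A \<Longrightarrow> x + y \<in> coneA A"
proof -
  assume "x \<in> coneA A" "y \<in> coneA A"
  then obtain n m where "x = (\<Sum>a\<in>A. int (n a) *s a, \<Sum>a\<in>A. int (n a))"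
    and "y = (\<Sum>a\<in>A. int (m a) *s a, \<Sum>a\<in>A. int (m a))"
    by (auto simp: coneA_def)
  then have "x + y = (\<Sum>a\<in>A. int (n a + m a) *s a, \<Sum>a\<in>A. int (n a + m a))"
    by (simp add: sum.distrib vector_sadd_rdistrib)
  then show ?thesis
    by (simp only: coneA_memI)
qed

lemma coneA_sum: "(\<And>i. i \<in> I \<Longrightarrow> g i \<in> coneA A) \<Longrightarrow> sum g I \<in> coneA A"
  by (induction I rule: infinite_finite_induct) (auto intro: coneA_add zero_in_coneA)

lemma scaled_lift_in_coneA:
  assumes "finite A" "a \<in> A" "c \<ge> 0"
  shows "(c *s a, c) \<in> coneA A"
proof -
  define n where "n b = (if b = a then nat c else 0)" for b
  have "(\<Sum>b\<in>A. int (n b) *s b) = (\<Sum>b\<in>A. if b = a then c *s a else 0)"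
    by (rule sum.cong) (auto simp: n_def assms(3))
  moreover have "(\<Sum>b\<in>A. int (n b)) = (\<Sum>b\<in>A. if b = a then c else 0)"
    by (rule sum.cong) (auto simp: n_def assms(3))
  ultimately show ?thesis
    using coneA_memI[of n A] assms(1,2) by simp
qed

lemma lift_in_coneA: "finite A \<Longrightarrow> a \<in> A \<Longrightarrow> lift a \<in> coneA A"
  using scaled_lift_in_coneA[of A a 1] by (simp add: lift_def)

lemma coneA_combination:
  assumes "finite A" "\<And>i. i \<in> I \<Longrightarrow> w i \<in> A" "\<And>i. i \<in> I \<Longrightarrow> c i \<ge> 0"
  shows "(\<Sum>i\<in>I. c i *s w i, \<Sum>i\<in>I. c i) \<in> coneA A"
proof -
  have "(\<Sum>i\<in>I. c i *s w i, \<Sum>i\<in>I. c i) = (\<Sum>i\<in>I. (c i *s w i, c i))"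
    by (simp add: prod_eq_iff fst_sum snd_sum)
  also have "\<dots> \<in> coneA A"
    using assms by (intro coneA_sum scaled_lift_in_coneA) auto
  finally show ?thesis .
qed

lemma coneA_mono: "finite A \<Longrightarrow> B \<subseteq> A \<Longrightarrow> coneA B \<subseteq> coneA A"
  by (auto simp: coneA_def [of B] intro!: coneA_combination)

lemma coneA_height_nonneg: "p \<in> coneA A \<Longrightarrow> 0 \<le> snd p"
  by (auto simp: coneA_def simp flip: of_nat_sum)

lemma coneA_height_eq_0:
  assumes "finite A" "p \<in> coneA A" "snd p = 0"
  shows "p = 0"
proof -
  obtain n where p: "p = (\<Sum>a\<in>A. int (n a) *s a, \<Sum>a\<in>A. int (n a))"
    using assms(2) by (auto simp: coneA_def)
  then have "sum n A = 0"
    using assms(3) by (simp flip: of_nat_sum)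
  then have "\<forall>a\<in>A. n a = 0"
    using assms(1) by simp
  then show ?thesis
    by (simp add: p zero_prod_def)
qed

lemma coneA_minus_lift:
  assumes A: "finite A" and "p \<in> coneA A" "snd p > 0"
  obtains a where "a \<in> A" "p - lift a \<in> coneA A"
proof -
  obtain n where p: "p = (\<Sum>a\<in>A. int (n a) *s a, \<Sum>a\<in>A. int (n a))"
    using assms(2) by (auto simp: coneA_def)
  then have "sum n A \<noteq> 0"
    using assms(3) by (simp flip: of_nat_sum)
  then obtain a where a: "a \<in> A" "n a \<noteq> 0"
    by (meson sum.neutral)
  define m where "m = n(a := n a - 1)"
  have na: "int (n a) = int (m a) + 1"
    using a by (simp add: m_def)
  have rest: "(\<Sum>b\<in>A - {a}. h b (n b)) = (\<Sum>b\<in>A - {a}. h b (m b))"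
    for h :: "_ \<Rightarrow> nat \<Rightarrow> 'x::comm_monoid_add"
    by (rule sum.cong) (auto simp: m_def)
  have "(\<Sum>b\<in>A. int (n b) *s b) = (\<Sum>b\<in>A. int (m b) *s b) + a"
    using rest[of "\<lambda>b k. int k *s b"] na
    by (simp add: sum.remove[OF A a(1)] vector_sadd_rdistrib algebra_simps)
  moreover have "(\<Sum>b\<in>A. int (n b)) = (\<Sum>b\<in>A. int (m b)) + 1"
    using rest[of "\<lambda>_. int"] na by (simp add: sum.remove[OF A a(1)])
  ultimately have "p - lift a = (\<Sum>b\<in>A. int (m b) *s b, \<Sum>b\<in>A. int (m b))"
    by (simp add: p lift_def)
  then show ?thesis
    using that[OF a(1)] by (simp add: coneA_memI)
qed

lemma coneA_lattice_path:
  assumes A: "finite A"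
  shows "p \<in> coneA A \<Longrightarrow> snd p = int h \<Longrightarrow>
    \<exists>P. P 0 = 0 \<and> P h = p \<and> (\<forall>k\<le>h. snd (P k) = int k) \<and>
        (\<forall>j k. j \<le> k \<longrightarrow> k \<le> h \<longrightarrow> P k - P j \<in> coneA A)"
proof (induction h arbitrary: p)
  case 0
  then have "p = 0"
    using coneA_height_eq_0[OF A] by simp
  then show ?case
    by (intro exI[of _ "\<lambda>_. 0"]) (simp add: zero_in_coneA)
next
  case (Suc h)
  obtain a where a: "a \<in> A" "p - lift a \<in> coneA A"
    using coneA_minus_lift[OF A Suc.prems(1)] Suc.prems(2) by auto
  moreover have "snd (p - lift a) = int h"
    using Suc.prems(2) by (simp add: lift_def)
  ultimately obtain P where P: "P 0 = 0" "P h = p - lift a" "\<forall>k\<le>h. snd (P k) = int k"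
    "\<forall>j k. j \<le> k \<longrightarrow> k \<le> h \<longrightarrow> P k - P j \<in> coneA A"
    using Suc.IH by blast
  define Q where "Q = P(Suc h := p)"
  have "p - Q j \<in> coneA A" if "j \<le> Suc h" for j
  proof (cases "j = Suc h")
    case False
    then have "P h - Q j \<in> coneA A"
      using P(4) that by (simp add: Q_def)
    moreover have "p - Q j = (P h - Q j) + lift a"
      using P(2) by simp
    ultimately show ?thesis
      using coneA_add lift_in_coneA[OF A a(1)] by metis
  qed (simp add: Q_def zero_in_coneA)
  then show ?case
    using P Suc.prems(2) by (intro exI[of _ Q]) (auto simp: Q_def le_Suc_eq)
qed

lemma finite_coneA_height_le:
  assumes A: "finite A"
  shows "finite {p \<in> coneA A. snd p \<le> H}"
proof -
  define F where "F n = (\<Sum>a\<in>A. int (n a) *s a, \<Sum>a\<in>A. int (n a))" for n :: "_ \<Rightarrow> nat"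
  have "{p \<in> coneA A. snd p \<le> H} \<subseteq> F ` (A \<rightarrow>\<^sub>E {0..nat H})"
  proof clarify
    fix p assume "p \<in> coneA A" "snd p \<le> H"
    then obtain n where p: "p = F n" and "sum n A \<le> nat H"
      by (auto simp: coneA_def F_def simp flip: of_nat_sum)
    have "F (restrict n A) = p"
      by (simp add: p F_def cong: sum.cong)
    moreover from \<open>sum n A \<le> nat H\<close> have "restrict n A \<in> A \<rightarrow>\<^sub>E {0..nat H}"
      using member_le_sum[of _ A n] A by (force intro: order_trans)
    ultimately show "p \<in> F ` (A \<rightarrow>\<^sub>E {0..nat H})"
      by (rule image_eqI[OF sym])
  qed
  then show ?thesis
    by (rule finite_subset) (intro finite_imageI finite_PiE A finite_atLeastAtMost)
qed

lemma uminus_lattice_of: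
  fixes v :: "nat \<Rightarrow> int^'d::finite"
  assumes "p \<in> lattice_of v"
  shows "- p \<in> lattice_of v"
proof -
  obtain c where "p = (\<Sum>i\<in>{1..CARD('d)+1}. c i *s v i, \<Sum>i\<in>{1..CARD('d)+1}. c i)"
    using assms by (auto simp: lattice_of_def)
  then have "- p = (\<Sum>i\<in>{1..CARD('d)+1}. (- c i) *s v i, \<Sum>i\<in>{1..CARD('d)+1}. - c i)"
    by (simp add: vec_eq_iff sum_component sum_negf)
  then show ?thesis
    unfolding lattice_of_def by (intro CollectI exI[of _ "\<lambda>i. - c i"]) simp
qed

section \<open>A lattice simplex\<close>

locale lattice_simplex =
  fixes v :: "nat \<Rightarrow> int^'d::finite" and e :: "'d \<Rightarrow> nat"
  assumes e_bij: "bij_betw e UNIV {1..CARD('d)}"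
    and v_inj: "inj_on v {1..CARD('d)+1}"
    and affine_indep: "\<not> affine_dependent (rvec ` v ` {1..CARD('d)+1})"
begin

definition edge :: "'d \<Rightarrow> real^'d" where
  "edge j = rvec (v (e j)) - rvec (v (CARD('d)+1))"

definition edge_map :: "real^'d \<Rightarrow> real^'d" where
  "edge_map t = (\<Sum>j\<in>UNIV. t $ j *\<^sub>R edge j)"

definition edge_comb :: "int^'d \<Rightarrow> int^'d" where
  "edge_comb \<kappa> = (\<Sum>j\<in>UNIV. \<kappa> $ j *s (v (e j) - v (CARD('d)+1)))"

lemma range_e: "range e = {1..CARD('d)}"
  using e_bij by (simp add: bij_betw_def)

lemma inj_e: "inj e"
  using e_bij by (simp add: bij_betw_def)

lemma e_mem: "e j \<in> {1..CARD('d)}"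
  using range_e by blast

lemma vertices_eq: "{1..CARD('d)+1} = insert (CARD('d)+1) (range e)"
  by (auto simp: range_e)

lemma apex_notin_range_e: "CARD('d)+1 \<notin> range e"
  by (simp add: range_e)

lemma sum_vertices: "(\<Sum>i\<in>{1..CARD('d)+1}. g i) = g (CARD('d)+1) + (\<Sum>j\<in>UNIV. g (e j))"
  unfolding vertices_eq using apex_notin_range_e inj_e by (simp add: sum.reindex)

lemma linear_edge_map: "linear edge_map"
  unfolding edge_map_def
  by (auto simp: linear_iff scaleR_add_left sum.distrib scaleR_sum_right)

lemma edge_map_rvec: "edge_map (rvec \<kappa>) = rvec (edge_comb \<kappa>)"
  unfolding edge_map_def edge_comb_def edge_def by (simp add: vec_eq_iff sum_component algebra_simps)

lemma edge_map_axis: "edge_map (axis j 1) = edge j"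
proof -
  have "edge_map (axis j 1) = (\<Sum>i\<in>UNIV. if i = j then edge j else 0)"
    unfolding edge_map_def by (rule sum.cong) (auto simp: axis_def)
  then show ?thesis
    by simp
qed

lemma inj_on_rvec_v: "inj_on (\<lambda>i. rvec (v i)) {1..CARD('d)+1}"
  using v_inj by (auto simp: inj_on_def rvec_eq_iff)

lemma independent_edges: "independent (range edge)"
proof -
  have apex: "rvec (v (CARD('d)+1)) \<notin> (\<lambda>j. rvec (v (e j))) ` UNIV"
    using inj_on_rvec_v apex_notin_range_e e_mem by (fastforce simp: inj_on_def)
  have "rvec ` v ` {1..CARD('d)+1} = insert (rvec (v (CARD('d)+1))) ((\<lambda>j. rvec (v (e j))) ` UNIV)"
    unfolding vertices_eq by auto
  then have "\<not> dependent ((\<lambda>x. - rvec (v (CARD('d)+1)) + x) ` (\<lambda>j. rvec (v (e j))) ` UNIV)"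
    using affine_indep affine_dependent_iff_dependent[OF apex] by simp
  then show ?thesis
    by (simp add: image_image edge_def)
qed

lemma inj_edge: "inj edge"
proof (rule injI)
  fix x y assume "edge x = edge y"
  then have "rvec (v (e x)) = rvec (v (e y))"
    by (simp add: edge_def)
  moreover have "e x \<in> {1..CARD('d)+1}" "e y \<in> {1..CARD('d)+1}"
    using e_mem[of x] e_mem[of y] by auto
  ultimately have "e x = e y"
    by (rule inj_onD[OF inj_on_rvec_v])
  then show "x = y"
    using inj_e by (simp add: inj_eq)
qed

lemma inj_edge_map: "inj edge_map"
proof -
  have "t = 0" if "edge_map t = 0" for t
  proof -
    define u where "u x = t $ inv edge x" for x
    have "(\<Sum>x\<in>range edge. u x *\<^sub>R x) = (\<Sum>j\<in>UNIV. u (edge j) *\<^sub>R edge j)"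
      using sum.reindex[OF inj_edge, of "\<lambda>x. u x *\<^sub>R x"] by simp
    also have "\<dots> = edge_map t"
      by (simp only: u_def inv_f_f[OF inj_edge] edge_map_def)
    finally have "(\<Sum>x\<in>range edge. u x *\<^sub>R x) = 0"
      using that by simp
    then have "u (edge j) = 0" for j
      by (rule independentD[OF independent_edges finite_imageI[OF finite_class.finite_UNIV] subset_refl _ rangeI])
    then show "t = 0"
      by (simp add: u_def inv_f_f[OF inj_edge] vec_eq_iff)
  qed
  then show ?thesis
    using linear_edge_map by (simp add: linear_injective_0)
qed

lemma convex_hull_vertices:
  "convex hull (rvec ` v ` {1..CARD('d)+1}) =
     (+) (rvec (v (CARD('d)+1))) ` edge_map ` (convex hull (insert 0 Basis))"
proof -
  have "edge_map ` Basis = range edge"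
    by (simp add: Basis_vec_def image_image UNION_singleton_eq_range edge_map_axis)
  then have vertices: "(+) (rvec (v (CARD('d)+1))) ` edge_map ` insert 0 Basis = rvec ` v ` {1..CARD('d)+1}"
    unfolding vertices_eq using linear_0[OF linear_edge_map] by (auto simp: image_image edge_def)
  have "(+) (rvec (v (CARD('d)+1))) ` edge_map ` (convex hull (insert 0 Basis)) =
      convex hull ((+) (rvec (v (CARD('d)+1))) ` edge_map ` insert 0 Basis)"
    by (simp only: convex_hull_linear_image[OF linear_edge_map] convex_hull_translation)
  then show ?thesis
    by (simp only: vertices)
qed

lemma measure_edge_map_cbox:
  "measure lebesgue (edge_map ` cbox 0 1) =
     fact CARD('d) * measure lebesgue (convex hull (rvec ` v ` {1..CARD('d)+1}))"
  unfolding convex_hull_vertices measure_translation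
  by (rule measure_linear_image_cbox_eq_fact_simplex[OF linear_edge_map])

lemma convex_hull_vertices_coords:
  assumes "x \<in> convex hull (rvec ` v ` {1..CARD('d)+1})"
  obtains t where "\<forall>j. 0 \<le> t $ j" "sum (($) t) UNIV \<le> 1" "x = rvec (v (CARD('d)+1)) + edge_map t"
proof -
  obtain t where t: "t \<in> convex hull (insert 0 Basis)" "x = rvec (v (CARD('d)+1)) + edge_map t"
    using assms unfolding convex_hull_vertices by blast
  have nonneg: "\<forall>b\<in>Basis. 0 \<le> t \<bullet> b" and sum: "(\<Sum>b\<in>Basis. t \<bullet> b) \<le> 1"
    using t(1) unfolding std_simplex by auto
  have "0 \<le> t $ j" for j
    using nonneg[rule_format, of "axis j 1"] by (simp add: cart_eq_inner_axis axis_in_Basis_iff)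
  moreover have "sum (($) t) UNIV \<le> 1"
    using sum by (simp only: sum_Basis_cart)
  ultimately show ?thesis
    using that t(2) by blast
qed

lemma vertex_combination_minus_apex:
  "(\<Sum>i\<in>{1..CARD('d)+1}. c i *s v i) - (\<Sum>i\<in>{1..CARD('d)+1}. c i) *s v (CARD('d)+1) =
     edge_comb (\<chi> j. c (e j))"
  unfolding sum_vertices edge_comb_def
  by (simp add: vec_eq_iff sum_component algebra_simps sum_subtractf sum_distrib_left)

lemma lattice_of_iff: "p \<in> lattice_of v \<longleftrightarrow> (\<exists>\<kappa>. fst p - snd p *s v (CARD('d)+1) = edge_comb \<kappa>)"
proof
  assume "p \<in> lattice_of v"
  then show "\<exists>\<kappa>. fst p - snd p *s v (CARD('d)+1) = edge_comb \<kappa>"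
    using vertex_combination_minus_apex by (auto simp: lattice_of_def)
next
  assume "\<exists>\<kappa>. fst p - snd p *s v (CARD('d)+1) = edge_comb \<kappa>"
  then obtain \<kappa> where \<kappa>: "fst p - snd p *s v (CARD('d)+1) = edge_comb \<kappa>" ..
  define c where "c i = (if i = CARD('d)+1 then snd p - sum (($) \<kappa>) UNIV else \<kappa> $ inv e i)" for i
  have c_e: "c (e j) = \<kappa> $ j" for j
    using apex_notin_range_e by (metis c_def inv_f_f[OF inj_e] rangeI)
  have snd_p: "(\<Sum>i\<in>{1..CARD('d)+1}. c i) = snd p"
    unfolding sum_vertices c_e by (simp add: c_def)
  moreover have "(\<chi> j. c (e j)) = \<kappa>"
    by (simp add: c_e vec_eq_iff)
  ultimately have "(\<Sum>i\<in>{1..CARD('d)+1}. c i *s v i) - snd p *s v (CARD('d)+1) =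
      fst p - snd p *s v (CARD('d)+1)"
    using vertex_combination_minus_apex[of c] \<kappa> by simp
  then have "p = (\<Sum>i\<in>{1..CARD('d)+1}. c i *s v i, \<Sum>i\<in>{1..CARD('d)+1}. c i)"
    using snd_p by (simp add: prod_eq_iff)
  then show "p \<in> lattice_of v"
    unfolding lattice_of_def by blast
qed

lemma card_pairwise_incongruent_le:
  assumes R: "finite R"
    and incongruent: "\<And>p q. p \<in> R \<Longrightarrow> q \<in> R \<Longrightarrow> p - q \<in> lattice_of v \<Longrightarrow> p = q"
  shows "real (card R) \<le> fact CARD('d) * measure lebesgue (convex hull (rvec ` v ` {1..CARD('d)+1}))"
proof -
  define \<phi> where "\<phi> p = fst p - snd p *s v (CARD('d)+1)" for p :: "(int^'d) \<times> int"
  have \<phi>_diff: "\<phi> p - \<phi> q = \<phi> (p - q)" for p q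
    by (simp add: \<phi>_def algebra_simps vector_sub_rdistrib)
  have \<phi>_incongruent: "p = q" if "p \<in> R" "q \<in> R" "\<phi> p - \<phi> q = edge_comb \<kappa>" for p q \<kappa>
  proof -
    have "\<phi> (p - q) = edge_comb \<kappa>"
      using that(3) by (simp only: \<phi>_diff)
    then have "p - q \<in> lattice_of v"
      unfolding lattice_of_iff \<phi>_def by blast
    then show ?thesis
      using incongruent[OF that(1,2)] by blast
  qed
  have "edge_comb 0 = 0"
    by (simp add: edge_comb_def)
  then have "inj_on \<phi> R"
    using \<phi>_incongruent by (intro inj_onI) (metis diff_self)
  have "real (card (\<phi> ` R)) \<le> measure lebesgue (edge_map ` cbox 0 1)"
  proof (rule card_pairwise_incongruent_le_measure[OF linear_edge_map inj_edge_map])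
    show "\<exists>\<mu>. edge_map (rvec \<kappa>) = rvec \<mu>" for \<kappa>
      by (auto simp: edge_map_rvec)
    fix r r' \<kappa> assume "r \<in> \<phi> ` R" "r' \<in> \<phi> ` R" and r: "rvec r - rvec r' = edge_map (rvec \<kappa>)"
    then obtain p q where pq: "p \<in> R" "q \<in> R" "r = \<phi> p" "r' = \<phi> q"
      by blast
    have "r - r' = edge_comb \<kappa>"
      using r by (simp add: edge_map_rvec rvec_eq_iff flip: rvec_diff)
    then show "r = r'"
      using \<phi>_incongruent[OF pq(1,2)] pq(3,4) by simp
  qed (use R in simp)
  then show ?thesis
    using card_image[OF \<open>inj_on \<phi> R\<close>] by (simp add: measure_edge_map_cbox)
qed

lemma exists_congruent_pair:
  assumes "fact CARD('d) * measure lebesgue (convex hull (rvec ` v ` {1..CARD('d)+1})) < real (Suc h)"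
    and "inj_on P {..h}"
  shows "\<exists>j k. j < k \<and> k \<le> h \<and> P k - P j \<in> lattice_of v"
proof (rule ccontr)
  assume none: "\<not> ?thesis"
  have "P k = P j" if "j \<le> h" "k \<le> h" "P k - P j \<in> lattice_of v" for j k
  proof -
    have "P j - P k \<in> lattice_of v"
      using uminus_lattice_of[OF that(3)] by simp
    then have "\<not> j < k" "\<not> k < j"
      using none that by blast+
    then show ?thesis
      by simp
  qed
  then have "real (card (P ` {..h})) \<le> fact CARD('d) * measure lebesgue (convex hull (rvec ` v ` {1..CARD('d)+1}))"
    by (intro card_pairwise_incongruent_le) (simp, blast)
  with assms show False
    by (simp add: card_image)
qed

lemma lattice_point_in_vertex_cone:
  assumes p: "p \<in> lattice_of v"
    and T: "rvec (fst p - snd p *s v (CARD('d)+1)) = edge_map T" "\<forall>j. 0 \<le> T $ j"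
      "sum (($) T) UNIV \<le> of_int (snd p)"
  shows "p \<in> coneA (v ` {1..CARD('d)+1})"
proof -
  obtain c where c: "p = (\<Sum>i\<in>{1..CARD('d)+1}. c i *s v i, \<Sum>i\<in>{1..CARD('d)+1}. c i)"
    using p by (auto simp: lattice_of_def)
  have "edge_map (rvec (\<chi> j. c (e j))) = edge_map T"
    using vertex_combination_minus_apex[of c] T(1) by (simp add: c edge_map_rvec)
  then have cT: "rvec (\<chi> j. c (e j)) = T"
    using inj_edge_map by (simp add: inj_eq)
  then have "0 \<le> c (e j)" for j
    using T(2) by (metis rvec_nth of_int_0_le_iff vec_lambda_beta)
  moreover have "0 \<le> c (CARD('d)+1)"
  proof -
    have "of_int (\<Sum>j\<in>UNIV. c (e j)) = sum (($) T) UNIV"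
      unfolding cT[symmetric] by simp
    moreover have "snd p = c (CARD('d)+1) + (\<Sum>j\<in>UNIV. c (e j))"
      unfolding c snd_conv by (rule sum_vertices)
    ultimately show ?thesis
      using T(3) by linarith
  qed
  ultimately have "0 \<le> c i" if "i \<in> {1..CARD('d)+1}" for i
    using that unfolding vertices_eq by blast
  then show ?thesis
    unfolding c by (intro coneA_combination) auto
qed

end

locale lattice_simplex_cover = lattice_simplex v e for v :: "nat \<Rightarrow> int^'d::finite" and e +
  fixes A :: "(int^'d) set"
  assumes finite_A: "finite A"
    and convex_hull_A: "convex hull (rvec ` A) = convex hull (rvec ` v ` {1..CARD('d)+1})"
begin

lemma vertex_in_A:
  assumes "i \<in> {1..CARD('d)+1}"
  shows "v i \<in> A"
proof -
  have "rvec (v i) extreme_point_of (convex hull (rvec ` v ` {1..CARD('d)+1}))"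
    using extreme_point_of_convex_hull_affine_independent[OF affine_indep] assms by auto
  then have "rvec (v i) \<in> rvec ` A"
    using convex_hull_A extreme_point_of_convex_hull by metis
  then show ?thesis
    by (auto simp: rvec_eq_iff)
qed

lemma coneA_edge_coords:
  assumes "q \<in> coneA A"
  obtains T where "\<forall>j. 0 \<le> T $ j" "sum (($) T) UNIV \<le> of_int (snd q)"
    "rvec (fst q - snd q *s v (CARD('d)+1)) = edge_map T"
proof -
  have "\<exists>t. (\<forall>j. 0 \<le> t $ j) \<and> sum (($) t) UNIV \<le> 1 \<and> rvec a = rvec (v (CARD('d)+1)) + edge_map t"
    if "a \<in> A" for a
    using convex_hull_vertices_coords hull_inc[of "rvec a" "rvec ` A"] that convex_hull_A by (metis imageI)
  then obtain t where t: "\<And>a. a \<in> A \<Longrightarrow> \<forall>j. 0 \<le> t a $ j"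
    "\<And>a. a \<in> A \<Longrightarrow> sum (($) (t a)) UNIV \<le> 1"
    "\<And>a. a \<in> A \<Longrightarrow> rvec a - rvec (v (CARD('d)+1)) = edge_map (t a)"
    by (metis add_diff_cancel_left')
  obtain n where q: "q = (\<Sum>a\<in>A. int (n a) *s a, \<Sum>a\<in>A. int (n a))"
    using assms by (auto simp: coneA_def)
  define T where "T = (\<Sum>a\<in>A. real (n a) *\<^sub>R t a)"
  have "\<forall>j. 0 \<le> T $ j"
    using t(1) by (auto simp: T_def sum_component intro: sum_nonneg)
  moreover have "sum (($) T) UNIV = (\<Sum>a\<in>A. real (n a) * sum (($) (t a)) UNIV)"
    unfolding T_def sum_component by (simp add: sum_distrib_left) (rule sum.swap)
  then have "sum (($) T) UNIV \<le> of_int (snd q)"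
    using t(2) by (simp add: q) (intro sum_mono mult_left_le, auto)
  moreover have "rvec (fst q - snd q *s v (CARD('d)+1)) =
      (\<Sum>a\<in>A. real (n a) *\<^sub>R (rvec a - rvec (v (CARD('d)+1))))"
    by (simp add: q vec_eq_iff sum_component algebra_simps sum_distrib_right sum_subtractf)
  then have "rvec (fst q - snd q *s v (CARD('d)+1)) = edge_map T"
    using t(3) by (simp add: T_def linear_sum[OF linear_edge_map] linear_scale[OF linear_edge_map])
  ultimately show ?thesis
    using that by blast
qed

lemma coneA_inter_lattice:
  assumes "q \<in> coneA A" "q \<in> lattice_of v"
  shows "q \<in> coneA (v ` {1..CARD('d)+1})"
  using coneA_edge_coords[OF assms(1)] lattice_point_in_vertex_cone[OF assms(2)] by metis

lemma coneA_lattice_minus_vertex: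
  assumes "x \<in> coneA A" "x \<in> lattice_of v" "snd x > 0"
  obtains i where "i \<in> {1..CARD('d)+1}" "x - lift (v i) \<in> coneA A"
proof -
  have "x \<in> coneA (v ` {1..CARD('d)+1})"
    using assms(1,2) by (rule coneA_inter_lattice)
  then obtain b where b: "b \<in> v ` {1..CARD('d)+1}" and "x - lift b \<in> coneA (v ` {1..CARD('d)+1})"
    using coneA_minus_lift[OF finite_imageI[OF finite_atLeastAtMost] _ assms(3)] by blast
  moreover have "coneA (v ` {1..CARD('d)+1}) \<subseteq> coneA A"
    using vertex_in_A by (intro coneA_mono[OF finite_A]) auto
  ultimately have "x - lift b \<in> coneA A"
    by blast
  with b show ?thesis
    using that by blast
qed

lemma minimal_elem_height_le:
  assumes min: "minimal_elem A v \<pi> (\<alpha>, M)"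
  shows "real_of_int M \<le> measure lebesgue (convex hull (rvec ` A)) * fact CARD('d) - 1"
proof (rule ccontr)
  assume too_high: "\<not> ?thesis"
  define h where "h = nat M"
  have q: "(\<alpha>, M) \<in> coneA A"
    using min by (simp add: minimal_elem_def S_pi_def)
  then have M: "M = int h"
    using coneA_height_nonneg[OF q] by (simp add: h_def)
  then obtain P where P: "P 0 = 0" "P h = (\<alpha>, M)" "\<forall>k\<le>h. snd (P k) = int k"
    "\<forall>j k. j \<le> k \<longrightarrow> k \<le> h \<longrightarrow> P k - P j \<in> coneA A"
    using coneA_lattice_path[OF finite_A q] by auto
  have "inj_on P {..h}"
    using P(3) by (intro inj_onI) (metis atMost_iff of_nat_eq_iff)
  moreover have "fact CARD('d) * measure lebesgue (convex hull (rvec ` v ` {1..CARD('d)+1})) < real (Suc h)"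
    using too_high M convex_hull_A by (simp add: mult.commute)
  ultimately obtain j k where jk: "j < k" "k \<le> h" and "P k - P j \<in> lattice_of v"
    using exists_congruent_pair by blast
  moreover have "P k - P j \<in> coneA A"
    using P(4) jk by simp
  moreover have "snd (P k - P j) > 0"
    using P(3) jk by simp
  ultimately obtain i where i: "i \<in> {1..CARD('d)+1}" and "P k - P j - lift (v i) \<in> coneA A"
    using coneA_lattice_minus_vertex by blast
  moreover have "P h - P k \<in> coneA A" "P j - P 0 \<in> coneA A"
    using P(4) jk by auto
  moreover have "(\<alpha>, M) - lift (v i) = (P h - P k) + (P j - P 0) + (P k - P j - lift (v i))"
    using P(1,2) by simp
  ultimately have "(\<alpha>, M) - lift (v i) \<in> coneA A"
    by (simp only: coneA_add)
  then show False
    using min i by (simp add: minimal_elem_def)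
qed

end

theorem lemma3p1:
  fixes A :: "(int^'d) set" and v :: "nat \<Rightarrow> int^'d" and \<pi> :: "(int^'d) \<times> int"
  assumes "finite A"
    and "int_span (diffset A) = UNIV"
    and "inj_on v {1..CARD('d)+1}"
    and "\<not> affine_dependent (rvec ` v ` {1..CARD('d)+1})"
    and "convex hull (rvec ` A) = convex hull (rvec ` v ` {1..CARD('d)+1})"
  shows "(\<forall>\<alpha> M. minimal_elem A v \<pi> (\<alpha>, M) \<longrightarrow>
            real_of_int M \<le> measure lebesgue (convex hull (rvec ` A)) * fact CARD('d) - 1)
         \<and> finite {p. minimal_elem A v \<pi> p}"
proof -
  obtain e :: "'d \<Rightarrow> nat" where "bij_betw e UNIV {1..CARD('d)}"
    using finite_same_card_bij[of "UNIV :: 'd set" "{1..CARD('d)}"] by auto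
  then interpret lattice_simplex_cover v e A
    using assms by unfold_locales
  define D where "D = measure lebesgue (convex hull (rvec ` A)) * fact CARD('d)"
  have bound: "real_of_int M \<le> D - 1" if "minimal_elem A v \<pi> (\<alpha>, M)" for \<alpha> M
    using minimal_elem_height_le[OF that] by (simp add: D_def)
  have "{p. minimal_elem A v \<pi> p} \<subseteq> {p \<in> coneA A. snd p \<le> \<lceil>D\<rceil>}"
  proof clarify
    fix \<alpha> M assume "minimal_elem A v \<pi> (\<alpha>, M)"
    moreover have "real_of_int M \<le> real_of_int \<lceil>D\<rceil>"
      using bound[OF calculation] le_of_int_ceiling[of D] by linarith
    ultimately show "(\<alpha>, M) \<in> coneA A \<and> snd (\<alpha>, M) \<le> \<lceil>D\<rceil>"
      by (simp add: minimal_elem_def S_pi_def)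
  qed
  then have "finite {p. minimal_elem A v \<pi> p}"
    by (rule finite_subset) (rule finite_coneA_height_le[OF assms(1)])
  then show ?thesis
    using bound by (simp add: D_def)
qed

end
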